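(* Let $1\le t\le n$, write $n=at+b$ with $a\ge1$ and $0\le b<t$, and let $\mathfrak p=(x_{i_1},\ldots,x_{i_a})$ with $1\le i_1<\cdots<i_a\le n$. Then $\mathfrak p\in\mathrm{Ass}(S/I_t(L_n))$ if and only if (1) $(j-1)t+b+1\le i_j\le jt$ for all $1\le j\le a$, and (2) $i_{j+1}-i_j\le t$ for all $1\le j\le a-1$.
   Context: $K$ is a field, $S=K[x_1,\ldots,x_n]$, $I_t(L_n)=(u_1,\ldots,u_{n-t+1})$ with $u_i=x_ix_{i+1}\cdots x_{i+t-1}$. *)

theory Defs
  imports Main "HOL-Library.Poly_Mapping"
begin

text \<open>Polynomials over a field K in variables x_1, x_2, ...: a polynomial is a finitely
supported map from monomials (finitely supported exponent vectors) to coefficients.\<close>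
type_synonym 'a mpoly = "(nat \<Rightarrow>\<^sub>0 nat) \<Rightarrow>\<^sub>0 'a"

definition polyS :: "nat \<Rightarrow> 'a::field mpoly set" where
  "polyS n = {p. \<forall>m \<in> Poly_Mapping.keys p. Poly_Mapping.keys m \<subseteq> {1..n}}"

definition var :: "nat \<Rightarrow> 'a::field mpoly" where
  "var i = Poly_Mapping.single (Poly_Mapping.single i 1) 1"

definition is_ideal :: "nat \<Rightarrow> 'a::field mpoly set \<Rightarrow> bool" where
  "is_ideal n J \<longleftrightarrow> J \<subseteq> polyS n \<and> 0 \<in> J \<and> (\<forall>p\<in>J. \<forall>q\<in>J. p + q \<in> J)
     \<and> (\<forall>r\<in>polyS n. \<forall>p\<in>J. r * p \<in> J)"

definition ideal_gen :: "nat \<Rightarrow> 'a::field mpoly set \<Rightarrow> 'a mpoly set" where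
  "ideal_gen n G = \<Inter>{J. is_ideal n J \<and> G \<subseteq> J}"

definition is_prime_ideal :: "nat \<Rightarrow> 'a::field mpoly set \<Rightarrow> bool" where
  "is_prime_ideal n P \<longleftrightarrow> is_ideal n P \<and> P \<noteq> polyS n
     \<and> (\<forall>a\<in>polyS n. \<forall>b\<in>polyS n. a * b \<in> P \<longrightarrow> a \<in> P \<or> b \<in> P)"

definition Ass :: "nat \<Rightarrow> 'a::field mpoly set \<Rightarrow> 'a mpoly set set" where
  "Ass n I = {P. is_prime_ideal n P \<and> (\<exists>f\<in>polyS n. P = {g \<in> polyS n. g * f \<in> I})}"

definition path_ideal :: "nat \<Rightarrow> nat \<Rightarrow> 'a::field mpoly set" where
  "path_ideal n t = ideal_gen n ((\<lambda>i. \<Prod>k\<in>{i..i+t-1}. var k) ` {1..n-t+1})"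

end

theory Submission
  imports Defs
begin

text \<open>
  The path ideal is the squarefree monomial ideal I generated by the monomials x_W of the
  windows W = {k, ..., k+t-1}. A monomial prime P_V = (x_v : v \<in> V) can only be associated
  to I if V meets every window: if P_V = (I : f), then every x_W lies in P_V. Conversely,
  with C the complement of V, (I : x_C) = P_V as soon as every window meets V and each
  v \<in> V is the only point of V in some window.

  For V = {i_1 < ... < i_a} with a = n div t, if every window meets V then i_1 \<le> t,
  i_a \<ge> n - t + 1 and consecutive gaps are at most t, which force the bounds (1).
  Conversely, (1) and (2) make every window meet V, and under (1) the window starting at
  (j-1)t+1 meets V only in i_j.
\<close>

section \<open>Squarefree monomial ideals\<close>

definition set_monomial :: "nat set \<Rightarrow> (nat \<Rightarrow>\<^sub>0 nat)" where
  "set_monomial W = (\<Sum>l\<in>W. Poly_Mapping.single l 1)"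

lemma lookup_set_monomial:
  "finite W \<Longrightarrow> Poly_Mapping.lookup (set_monomial W) l = (if l \<in> W then 1 else 0)"
  by (simp add: set_monomial_def lookup_sum lookup_single when_def)

lemma keys_set_monomial [simp]: "finite W \<Longrightarrow> Poly_Mapping.keys (set_monomial W) = W"
  by (auto simp: in_keys_iff lookup_set_monomial split: if_splits)

lemma keys_add_nat [simp]:
  "Poly_Mapping.keys ((m1::'k \<Rightarrow>\<^sub>0 nat) + m2) = Poly_Mapping.keys m1 \<union> Poly_Mapping.keys m2"
  by (auto simp: in_keys_iff lookup_add)

lemma prod_var_eq_single:
  "finite W \<Longrightarrow> (\<Prod>k\<in>W. var k) = (Poly_Mapping.single (set_monomial W) 1 :: 'a::field mpoly)"
  by (induction W rule: finite_induct) (simp_all add: var_def mult_single set_monomial_def)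

lemma sum_single_lookup:
  "(\<Sum>m\<in>Poly_Mapping.keys p. Poly_Mapping.single m (Poly_Mapping.lookup p m)) = p"
  by (rule poly_mapping_eqI) (simp add: lookup_sum lookup_single when_def in_keys_iff)

lemma keys_mult_single_one:
  "Poly_Mapping.keys (g * Poly_Mapping.single F (1::'a::comm_semiring_1))
     = (\<lambda>m. m + (F::'k::cancel_comm_monoid_add)) ` Poly_Mapping.keys g"
proof
  show "Poly_Mapping.keys (g * Poly_Mapping.single F 1) \<subseteq> (\<lambda>m. m + F) ` Poly_Mapping.keys g"
    using keys_mult[of g "Poly_Mapping.single F 1"] by auto
  have "g * Poly_Mapping.single F 1
      = (\<Sum>m\<in>Poly_Mapping.keys g. Poly_Mapping.single (m + F) (Poly_Mapping.lookup g m))"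
    by (subst (1) sum_single_lookup[symmetric]) (simp add: sum_distrib_right mult_single)
  then have "Poly_Mapping.lookup (g * Poly_Mapping.single F 1) (m + F) = Poly_Mapping.lookup g m" for m
    by (simp add: lookup_sum lookup_single when_def in_keys_iff)
  then show "(\<lambda>m. m + F) ` Poly_Mapping.keys g \<subseteq> Poly_Mapping.keys (g * Poly_Mapping.single F 1)"
    by (auto simp: in_keys_iff)
qed

lemma polyS_add: "p \<in> polyS n \<Longrightarrow> q \<in> polyS n \<Longrightarrow> p + q \<in> polyS n"
  using keys_add[of p q] unfolding polyS_def by blast

lemma polyS_mult:
  assumes "p \<in> polyS n" "q \<in> polyS n"
  shows "p * q \<in> polyS n"
proof -
  have "Poly_Mapping.keys m \<subseteq> {1..n}" if m: "m \<in> Poly_Mapping.keys (p * q)" for m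
  proof -
    obtain x y where "m = x + y" "x \<in> Poly_Mapping.keys p" "y \<in> Poly_Mapping.keys q"
      using keys_mult[of p q] m by auto
    then show ?thesis
      using assms by (auto simp: polyS_def)
  qed
  then show ?thesis
    by (simp add: polyS_def)
qed

lemma polyS_single:
  "Poly_Mapping.keys m \<subseteq> {1..n} \<Longrightarrow> (Poly_Mapping.single m c :: 'a::field mpoly) \<in> polyS n"
  unfolding polyS_def by auto

lemma polyS_keys_subset:
  "p \<in> polyS n \<Longrightarrow> Poly_Mapping.keys q \<subseteq> Poly_Mapping.keys p \<Longrightarrow> q \<in> polyS n"
  unfolding polyS_def by blast

lemma is_ideal_sum: "is_ideal n K \<Longrightarrow> (\<And>x. x \<in> A \<Longrightarrow> f x \<in> K) \<Longrightarrow> sum f A \<in> K"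
  by (induction A rule: infinite_finite_induct) (auto simp: is_ideal_def)

lemma is_ideal_diff:
  assumes K: "is_ideal n K" and "p \<in> K" "q \<in> K"
  shows "p - q \<in> K"
proof -
  have "- 1 \<in> polyS n"
    unfolding polyS_def by simp
  then have "p + (- 1) * q \<in> K"
    using assms unfolding is_ideal_def by blast
  then show ?thesis by simp
qed

definition sqfree_monomial_ideal :: "nat \<Rightarrow> nat set set \<Rightarrow> 'a::field mpoly set" where
  "sqfree_monomial_ideal n WW =
     {p \<in> polyS n. \<forall>m\<in>Poly_Mapping.keys p. \<exists>W\<in>WW. W \<subseteq> Poly_Mapping.keys m}"

lemma is_ideal_sqfree_monomial_ideal: "is_ideal n (sqfree_monomial_ideal n WW)"
  unfolding is_ideal_def
proof (intro conjI ballI)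
  show "sqfree_monomial_ideal n WW \<subseteq> polyS n" "0 \<in> sqfree_monomial_ideal n WW"
    by (auto simp: sqfree_monomial_ideal_def polyS_def)
next
  fix p q :: "'a mpoly" assume "p \<in> sqfree_monomial_ideal n WW" "q \<in> sqfree_monomial_ideal n WW"
  then show "p + q \<in> sqfree_monomial_ideal n WW"
    using keys_add[of p q] by (auto simp: sqfree_monomial_ideal_def polyS_add)
next
  fix r p :: "'a mpoly" assume r: "r \<in> polyS n" and p: "p \<in> sqfree_monomial_ideal n WW"
  have "\<exists>W\<in>WW. W \<subseteq> Poly_Mapping.keys m" if m: "m \<in> Poly_Mapping.keys (r * p)" for m
  proof -
    obtain x y where xy: "m = x + y" "y \<in> Poly_Mapping.keys p"
      using keys_mult[of r p] m by auto
    then obtain W where "W \<in> WW" "W \<subseteq> Poly_Mapping.keys y"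
      using p by (auto simp: sqfree_monomial_ideal_def)
    then show ?thesis
      using xy(1) by auto
  qed
  with r p show "r * p \<in> sqfree_monomial_ideal n WW"
    by (simp add: sqfree_monomial_ideal_def polyS_mult)
qed

lemma single_mem_ideal_if_divisible:
  assumes K: "is_ideal n K" and W: "finite W" "W \<subseteq> Poly_Mapping.keys m"
    and m: "Poly_Mapping.keys m \<subseteq> {1..n}"
    and gen: "Poly_Mapping.single (set_monomial W) 1 \<in> K"
  shows "Poly_Mapping.single m c \<in> K"
proof -
  have m_eq: "m = (m - set_monomial W) + set_monomial W"
    by (rule poly_mapping_eqI)
      (use W in \<open>auto simp: lookup_add lookup_minus lookup_set_monomial in_keys_iff\<close>)
  have "Poly_Mapping.keys (m - set_monomial W) \<subseteq> {1..n}"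
    using m by (auto simp: in_keys_iff lookup_minus)
  then have "Poly_Mapping.single (m - set_monomial W) c \<in> polyS n"
    by (rule polyS_single)
  with K gen have "Poly_Mapping.single (m - set_monomial W) c * Poly_Mapping.single (set_monomial W) 1 \<in> K"
    unfolding is_ideal_def by blast
  then show ?thesis
    by (subst m_eq) (simp add: mult_single)
qed

lemma ideal_gen_set_monomials:
  assumes WW: "\<And>W. W \<in> WW \<Longrightarrow> W \<subseteq> {1..n}"
  shows "ideal_gen n ((\<lambda>W. Poly_Mapping.single (set_monomial W) (1::'a::field)) ` WW)
       = sqfree_monomial_ideal n WW"
proof
  have fin: "finite W" if "W \<in> WW" for W
    using WW[OF that] finite_subset by blast
  have "Poly_Mapping.single (set_monomial W) (1::'a) \<in> sqfree_monomial_ideal n WW" if "W \<in> WW" for W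
    using that WW[OF that] fin[OF that] by (auto simp: sqfree_monomial_ideal_def intro!: polyS_single)
  then have "(\<lambda>W. Poly_Mapping.single (set_monomial W) (1::'a)) ` WW \<subseteq> sqfree_monomial_ideal n WW"
    by blast
  then show "ideal_gen n ((\<lambda>W. Poly_Mapping.single (set_monomial W) (1::'a)) ` WW)
      \<subseteq> sqfree_monomial_ideal n WW"
    unfolding ideal_gen_def using is_ideal_sqfree_monomial_ideal by blast
  show "sqfree_monomial_ideal n WW
      \<subseteq> ideal_gen n ((\<lambda>W. Poly_Mapping.single (set_monomial W) (1::'a)) ` WW)"
    unfolding ideal_gen_def
  proof (intro Inter_greatest subsetI, clarify)
    fix K :: "'a mpoly set" and p :: "'a mpoly"
    assume K: "is_ideal n K" and gens: "(\<lambda>W. Poly_Mapping.single (set_monomial W) 1) ` WW \<subseteq> K"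
      and p: "p \<in> sqfree_monomial_ideal n WW"
    have "Poly_Mapping.single m (Poly_Mapping.lookup p m) \<in> K" if m: "m \<in> Poly_Mapping.keys p" for m
    proof -
      obtain W where W: "W \<in> WW" "W \<subseteq> Poly_Mapping.keys m"
        using p m by (auto simp: sqfree_monomial_ideal_def)
      have "Poly_Mapping.keys m \<subseteq> {1..n}"
        using p m by (auto simp: sqfree_monomial_ideal_def polyS_def)
      moreover have "Poly_Mapping.single (set_monomial W) 1 \<in> K"
        using gens W(1) by blast
      ultimately show ?thesis
        using single_mem_ideal_if_divisible[OF K fin[OF W(1)] W(2)] by blast
    qed
    then have "(\<Sum>m\<in>Poly_Mapping.keys p. Poly_Mapping.single m (Poly_Mapping.lookup p m)) \<in> K"
      by (rule is_ideal_sum[OF K])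
    then show "p \<in> K"
      by (simp only: sum_single_lookup)
  qed
qed

section \<open>Monomial primes and associated primes\<close>

definition restrict_keys :: "('k \<Rightarrow> bool) \<Rightarrow> ('k \<Rightarrow>\<^sub>0 'b::comm_monoid_add) \<Rightarrow> ('k \<Rightarrow>\<^sub>0 'b)" where
  "restrict_keys Q p = (\<Sum>m\<in>{m \<in> Poly_Mapping.keys p. Q m}. Poly_Mapping.single m (Poly_Mapping.lookup p m))"

lemma lookup_restrict_keys:
  "Poly_Mapping.lookup (restrict_keys Q p) k = (if Q k then Poly_Mapping.lookup p k else 0)"
  by (auto simp: restrict_keys_def lookup_sum lookup_single when_def in_keys_iff)

lemma keys_restrict_keys:
  "Poly_Mapping.keys (restrict_keys Q p) = {m \<in> Poly_Mapping.keys p. Q m}"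
  by (auto simp: in_keys_iff lookup_restrict_keys split: if_splits)

lemma keys_diff_restrict_keys:
  "Poly_Mapping.keys (p - restrict_keys Q (p::'k \<Rightarrow>\<^sub>0 'b::ab_group_add))
     = {m \<in> Poly_Mapping.keys p. \<not> Q m}"
  by (auto simp: in_keys_iff lookup_minus lookup_restrict_keys split: if_splits)

lemma sqfree_monomial_ideal_singletons:
  "sqfree_monomial_ideal n ((\<lambda>v. {v}) ` V)
     = {p \<in> polyS n. \<forall>m\<in>Poly_Mapping.keys p. Poly_Mapping.keys m \<inter> V \<noteq> {}}"
  by (auto simp: sqfree_monomial_ideal_def)

lemma is_prime_ideal_vars:
  "is_prime_ideal n (sqfree_monomial_ideal n ((\<lambda>v. {v}) ` V) :: 'a::field mpoly set)"
proof -
  define P where "P = (sqfree_monomial_ideal n ((\<lambda>v. {v}) ` V) :: 'a mpoly set)"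
  have P_iff: "p \<in> P \<longleftrightarrow> p \<in> polyS n \<and> (\<forall>m\<in>Poly_Mapping.keys p. Poly_Mapping.keys m \<inter> V \<noteq> {})" for p
    by (simp add: P_def sqfree_monomial_ideal_singletons)
  have P_ideal: "is_ideal n P"
    unfolding P_def by (rule is_ideal_sqfree_monomial_ideal)
  have "1 \<notin> P"
    by (simp add: P_iff)
  then have P_proper: "P \<noteq> polyS n"
    unfolding polyS_def by auto
  define Q where "Q m \<longleftrightarrow> Poly_Mapping.keys m \<inter> V = {}" for m :: "nat \<Rightarrow>\<^sub>0 nat"
  have split: "restrict_keys Q p \<in> polyS n" "p - restrict_keys Q p \<in> P"
    if p: "p \<in> polyS n" for p :: "'a mpoly"
  proof -
    show "restrict_keys Q p \<in> polyS n"
      by (rule polyS_keys_subset[OF p]) (simp add: keys_restrict_keys)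
    have "p - restrict_keys Q p \<in> polyS n"
      by (rule polyS_keys_subset[OF p]) (auto simp: keys_diff_restrict_keys)
    then show "p - restrict_keys Q p \<in> P"
      by (simp add: P_iff keys_diff_restrict_keys Q_def)
  qed
  \<comment> \<open>The parts of a and b avoiding V multiply to an element of P all of whose monomials
    avoid V, hence to 0.\<close>
  have "a \<in> P \<or> b \<in> P" if a: "a \<in> polyS n" and b: "b \<in> polyS n" and ab: "a * b \<in> P" for a b :: "'a mpoly"
  proof -
    define a0 b0 where "a0 = restrict_keys Q a" and "b0 = restrict_keys Q b"
    have "a0 * b0 = a * b - (a0 * (b - b0) + b * (a - a0))"
      by (simp add: algebra_simps)
    also have "\<dots> \<in> P"
    proof (rule is_ideal_diff[OF P_ideal ab])
      have "a0 * (b - b0) \<in> P" "b * (a - a0) \<in> P"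
        using P_ideal split a b unfolding a0_def b0_def is_ideal_def by blast+
      then show "a0 * (b - b0) + b * (a - a0) \<in> P"
        using P_ideal unfolding is_ideal_def by blast
    qed
    finally have "a0 * b0 \<in> P" .
    moreover have "Q m" if m: "m \<in> Poly_Mapping.keys (a0 * b0)" for m
    proof -
      obtain x y where "m = x + y" "x \<in> Poly_Mapping.keys a0" "y \<in> Poly_Mapping.keys b0"
        using keys_mult[of a0 b0] m by auto
      then show ?thesis
        by (auto simp: a0_def b0_def keys_restrict_keys Q_def)
    qed
    ultimately have "Poly_Mapping.keys (a0 * b0) = {}"
      unfolding P_iff Q_def by blast
    then have "a0 * b0 = 0"
      by simp
    then have "a0 = 0 \<or> b0 = 0"
      by simp
    then show ?thesis
      using split(2)[OF a] split(2)[OF b] unfolding a0_def b0_def by auto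
  qed
  with P_ideal P_proper show ?thesis
    unfolding is_prime_ideal_def P_def by blast
qed

lemma mult_set_monomial_mem_iff:
  assumes C: "finite C" "C \<subseteq> {1..n}" and g: "g \<in> polyS n"
  shows "g * Poly_Mapping.single (set_monomial C) 1 \<in> sqfree_monomial_ideal n WW
     \<longleftrightarrow> (\<forall>m\<in>Poly_Mapping.keys g. \<exists>W\<in>WW. W \<subseteq> Poly_Mapping.keys m \<union> C)"
proof -
  have "Poly_Mapping.single (set_monomial C) (1::'a) \<in> polyS n"
    using C by (simp add: polyS_single)
  with g have "g * Poly_Mapping.single (set_monomial C) 1 \<in> polyS n"
    by (rule polyS_mult)
  moreover have "Poly_Mapping.keys (g * Poly_Mapping.single (set_monomial C) (1::'a))
      = (\<lambda>m. m + set_monomial C) ` Poly_Mapping.keys g"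
    by (rule keys_mult_single_one)
  moreover have "Poly_Mapping.keys (m + set_monomial C) = Poly_Mapping.keys m \<union> C" for m
    using C(1) by simp
  ultimately show ?thesis
    unfolding sqfree_monomial_ideal_def by auto
qed

lemma Ass_vars_ideal_imp_transversal:
  assumes WW: "\<And>W. W \<in> WW \<Longrightarrow> W \<subseteq> {1..n}"
    and Ass: "sqfree_monomial_ideal n ((\<lambda>v. {v}) ` V)
      \<in> Ass n (sqfree_monomial_ideal n WW :: 'a::field mpoly set)"
    and W: "W \<in> WW"
  shows "W \<inter> V \<noteq> {}"
proof -
  obtain f :: "'a mpoly" where f: "f \<in> polyS n"
    and colon: "sqfree_monomial_ideal n ((\<lambda>v. {v}) ` V) = {g \<in> polyS n. g * f \<in> sqfree_monomial_ideal n WW}"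
    using Ass unfolding Ass_def by blast
  let ?u = "Poly_Mapping.single (set_monomial W) (1::'a)"
  have "?u \<in> ideal_gen n ((\<lambda>W. Poly_Mapping.single (set_monomial W) 1) ` WW)"
    using W unfolding ideal_gen_def by blast
  then have u: "?u \<in> sqfree_monomial_ideal n WW"
    by (simp add: ideal_gen_set_monomials[OF WW])
  then have "f * ?u \<in> sqfree_monomial_ideal n WW"
    using is_ideal_sqfree_monomial_ideal[of n WW] f unfolding is_ideal_def by blast
  moreover have "?u \<in> polyS n"
    using u by (simp add: sqfree_monomial_ideal_def)
  ultimately have "?u \<in> sqfree_monomial_ideal n ((\<lambda>v. {v}) ` V)"
    unfolding colon by (simp add: mult.commute)
  moreover have "finite W"
    using WW[OF W] finite_subset by blast
  ultimately show ?thesis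
    by (auto simp: sqfree_monomial_ideal_singletons)
qed

lemma minimal_transversal_imp_Ass_vars_ideal:
  assumes WW: "\<And>W. W \<in> WW \<Longrightarrow> W \<subseteq> {1..n}"
    and hit: "\<And>W. W \<in> WW \<Longrightarrow> W \<inter> V \<noteq> {}"
    and critical: "\<And>v. v \<in> V \<Longrightarrow> \<exists>W\<in>WW. W \<inter> V \<subseteq> {v}"
  shows "sqfree_monomial_ideal n ((\<lambda>v. {v}) ` V)
      \<in> Ass n (sqfree_monomial_ideal n WW :: 'a::field mpoly set)"
proof -
  define C where "C = {1..n} - V"
  have C: "finite C" "C \<subseteq> {1..n}"
    unfolding C_def by auto
  have hits_iff: "Poly_Mapping.keys m \<inter> V \<noteq> {} \<longleftrightarrow> (\<exists>W\<in>WW. W \<subseteq> Poly_Mapping.keys m \<union> C)"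
    for m :: "nat \<Rightarrow>\<^sub>0 nat"
  proof
    assume "Poly_Mapping.keys m \<inter> V \<noteq> {}"
    then obtain v where v: "v \<in> Poly_Mapping.keys m" "v \<in> V"
      by blast
    then obtain W where "W \<in> WW" "W \<inter> V \<subseteq> {v}"
      using critical by blast
    moreover have "W \<subseteq> {1..n}"
      using WW \<open>W \<in> WW\<close> .
    ultimately show "\<exists>W\<in>WW. W \<subseteq> Poly_Mapping.keys m \<union> C"
      using v unfolding C_def by blast
  next
    assume "\<exists>W\<in>WW. W \<subseteq> Poly_Mapping.keys m \<union> C"
    with hit show "Poly_Mapping.keys m \<inter> V \<noteq> {}"
      unfolding C_def by blast
  qed
  let ?f = "Poly_Mapping.single (set_monomial C) (1::'a)"
  have "sqfree_monomial_ideal n ((\<lambda>v. {v}) ` V) = {g \<in> polyS n. g * ?f \<in> sqfree_monomial_ideal n WW}"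
  proof (intro set_eqI iffI)
    fix g :: "'a mpoly"
    assume "g \<in> sqfree_monomial_ideal n ((\<lambda>v. {v}) ` V)"
    then have g: "g \<in> polyS n" and "\<forall>m\<in>Poly_Mapping.keys g. Poly_Mapping.keys m \<inter> V \<noteq> {}"
      unfolding sqfree_monomial_ideal_singletons by blast+
    then have "\<forall>m\<in>Poly_Mapping.keys g. \<exists>W\<in>WW. W \<subseteq> Poly_Mapping.keys m \<union> C"
      using hits_iff by blast
    with g show "g \<in> {g \<in> polyS n. g * ?f \<in> sqfree_monomial_ideal n WW}"
      using mult_set_monomial_mem_iff[OF C g] by blast
  next
    fix g :: "'a mpoly"
    assume "g \<in> {g \<in> polyS n. g * ?f \<in> sqfree_monomial_ideal n WW}"
    then have g: "g \<in> polyS n" and "g * ?f \<in> sqfree_monomial_ideal n WW"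
      by blast+
    then have "\<forall>m\<in>Poly_Mapping.keys g. \<exists>W\<in>WW. W \<subseteq> Poly_Mapping.keys m \<union> C"
      using mult_set_monomial_mem_iff[OF C g] by blast
    then have "\<forall>m\<in>Poly_Mapping.keys g. Poly_Mapping.keys m \<inter> V \<noteq> {}"
      using hits_iff by blast
    with g show "g \<in> sqfree_monomial_ideal n ((\<lambda>v. {v}) ` V)"
      unfolding sqfree_monomial_ideal_singletons by blast
  qed
  moreover have "?f \<in> polyS n"
    using C by (simp add: polyS_single)
  ultimately show ?thesis
    unfolding Ass_def using is_prime_ideal_vars by blast
qed

section \<open>Windows of the path\<close>

definition windows :: "nat \<Rightarrow> nat \<Rightarrow> nat set set" where
  "windows n t = (\<lambda>k. {k..k+t-1}) ` {1..n-t+1}"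

lemma windows_subset: "t \<le> n \<Longrightarrow> W \<in> windows n t \<Longrightarrow> W \<subseteq> {1..n}"
  by (auto simp: windows_def)

lemma windows_hit_iff:
  "(\<forall>W\<in>windows n t. W \<inter> i ` A \<noteq> {}) \<longleftrightarrow> (\<forall>k\<in>{1..n-t+1}. \<exists>j\<in>A. k \<le> i j \<and> i j \<le> k + t - 1)"
proof -
  have "{k..k+t-1} \<inter> i ` A \<noteq> {} \<longleftrightarrow> (\<exists>j\<in>A. k \<le> i j \<and> i j \<le> k + t - 1)" for k
    by auto
  then show ?thesis
    unfolding windows_def by simp
qed

lemma path_ideal_eq_sqfree_monomial_ideal:
  assumes "t \<le> n"
  shows "path_ideal n t = (sqfree_monomial_ideal n (windows n t) :: 'a::field mpoly set)"
proof -
  have "(\<lambda>k. \<Prod>l\<in>{k..k+t-1}. var l) ` {1..n-t+1}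
      = (\<lambda>W. Poly_Mapping.single (set_monomial W) (1::'a)) ` windows n t"
    unfolding windows_def image_image by (rule image_cong) (simp_all add: prod_var_eq_single)
  then show ?thesis
    unfolding path_ideal_def using ideal_gen_set_monomials[OF windows_subset[OF assms]] by simp
qed

lemma ideal_gen_vars:
  assumes "V \<subseteq> {1..n}"
  shows "ideal_gen n (var ` V) = (sqfree_monomial_ideal n ((\<lambda>v. {v}) ` V) :: 'a::field mpoly set)"
proof -
  have "W \<subseteq> {1..n}" if "W \<in> (\<lambda>v. {v}) ` V" for W
    using that assms by blast
  then have "ideal_gen n ((\<lambda>W. Poly_Mapping.single (set_monomial W) (1::'a)) ` (\<lambda>v. {v}) ` V)
      = sqfree_monomial_ideal n ((\<lambda>v. {v}) ` V)"
    by (rule ideal_gen_set_monomials)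
  moreover have "var ` V = (\<lambda>W. Poly_Mapping.single (set_monomial W) (1::'a)) ` (\<lambda>v. {v}) ` V"
    unfolding image_image by (rule image_cong) (simp_all add: var_def set_monomial_def)
  ultimately show ?thesis
    by simp
qed

lemma div_mod_window_count:
  fixes n t :: nat
  assumes "1 \<le> t" "t \<le> n"
  shows "1 \<le> n div t" and "n - t + 1 = (n div t - 1) * t + n mod t + 1"
proof -
  show "1 \<le> n div t"
    using assms by (simp add: div_greater_zero_iff Suc_le_eq)
  then have "(n div t - 1) * t = n div t * t - t" "t \<le> n div t * t"
    by (simp_all add: diff_mult_distrib)
  then show "n - t + 1 = (n div t - 1) * t + n mod t + 1"
    using div_mult_mod_eq[of n t] by linarith
qed

lemma increasing_le:
  fixes i :: "nat \<Rightarrow> nat"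
  assumes inc: "\<forall>j\<in>{1..<a}. i j < i (j+1)" and "1 \<le> j" "j \<le> j'" "j' \<le> a"
  shows "i j \<le> i j'"
  using assms(3,4)
proof (induction j' rule: dec_induct)
  case (step k)
  then have "i j \<le> i k"
    by simp
  also have "i k < i (k+1)"
    using inc step assms(2) by simp
  finally show ?case
    by simp
qed simp

lemma increasing_image_subset:
  fixes i :: "nat \<Rightarrow> nat"
  assumes inc: "\<forall>j\<in>{1..<a}. i j < i (j+1)" and "1 \<le> i 1" "i a \<le> n"
  shows "i ` {1..a} \<subseteq> {1..n}"
proof
  fix v assume "v \<in> i ` {1..a}"
  then obtain j where "j \<in> {1..a}" "v = i j"
    by blast
  then show "v \<in> {1..n}"
    using increasing_le[OF inc, of 1 j] increasing_le[OF inc, of j a] assms(2,3) by auto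
qed

lemma gap_bounded_le_add:
  fixes i :: "nat \<Rightarrow> nat"
  assumes gap: "\<forall>j\<in>{1..<a}. i (j+1) - i j \<le> t" and "1 \<le> j" "j \<le> j'" "j' \<le> a"
  shows "i j' \<le> i j + (j' - j) * t"
  using assms(3,4)
proof (induction j' rule: dec_induct)
  case (step k)
  then have "i k \<le> i j + (k - j) * t"
    by simp
  moreover have "i (k+1) - i k \<le> t"
    using gap step assms(2) by simp
  moreover have "(Suc k - j) * t = (k - j) * t + t"
    using step(1) by (simp add: Suc_diff_le)
  ultimately show ?case
    by simp
qed simp

lemma hitting_windows_imp_gaps:
  fixes i :: "nat \<Rightarrow> nat"
  assumes inc: "\<forall>j\<in>{1..<a}. i j < i (j+1)" and ia: "i a \<le> n"
    and hit: "\<forall>k\<in>{1..n-t+1}. \<exists>j\<in>{1..a}. k \<le> i j \<and> i j \<le> k + t - 1"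
    and j: "j \<in> {1..<a}"
  shows "i (j+1) - i j \<le> t"
proof (rule ccontr)
  assume "\<not> i (j+1) - i j \<le> t"
  then have far: "i j + t < i (j+1)"
    by simp
  have "i (j+1) \<le> i a"
    using increasing_le[OF inc, of "j+1" a] j by simp
  then have "i j + 1 \<in> {1..n-t+1}"
    using far ia by simp
  then obtain j' where j': "j' \<in> {1..a}" "i j + 1 \<le> i j'" "i j' \<le> i j + t"
    using hit by fastforce
  show False
  proof (cases "j' \<le> j")
    case True
    then show False
      using increasing_le[OF inc, of j' j] j j' by simp
  next
    case False
    then show False
      using increasing_le[OF inc, of "j+1" j'] j j' far by simp
  qed
qed

lemma hitting_windows_imp_position_bounds:
  fixes n t a b :: nat and i :: "nat \<Rightarrow> nat"
  assumes t: "1 \<le> t" "t \<le> n" and ab: "a = n div t" "b = n mod t"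
    and inc: "\<forall>j\<in>{1..<a}. i j < i (j+1)" and ia: "i a \<le> n"
    and hit_windows: "\<forall>W\<in>windows n t. W \<inter> i ` {1..a} \<noteq> {}"
  shows "(\<forall>j\<in>{1..a}. (j-1)*t + b + 1 \<le> i j \<and> i j \<le> j*t)
        \<and> (\<forall>j\<in>{1..<a}. i (j+1) - i j \<le> t)"
proof -
  have hit: "\<forall>k\<in>{1..n-t+1}. \<exists>j\<in>{1..a}. k \<le> i j \<and> i j \<le> k + t - 1"
    using hit_windows unfolding windows_hit_iff .
  have gap: "\<forall>j\<in>{1..<a}. i (j+1) - i j \<le> t"
    using hitting_windows_imp_gaps[OF inc ia hit] by blast
  have last_window: "n - t + 1 = (a - 1) * t + b + 1"
    unfolding ab by (rule div_mod_window_count(2)[OF t])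
  have "\<exists>j\<in>{1..a}. 1 \<le> i j \<and> i j \<le> 1 + t - 1"
    using bspec[OF hit, of 1] by simp
  then obtain j1 where j1: "j1 \<in> {1..a}" "i j1 \<le> t"
    by auto
  have i1: "i 1 \<le> t"
    using increasing_le[OF inc, of 1 j1] j1 by simp
  have "\<exists>j\<in>{1..a}. n - t + 1 \<le> i j \<and> i j \<le> n - t + 1 + t - 1"
    using bspec[OF hit, of "n - t + 1"] by simp
  then obtain ja where ja: "ja \<in> {1..a}" "n - t + 1 \<le> i ja"
    by auto
  have ia_low: "n - t + 1 \<le> i a"
    using increasing_le[OF inc, of ja a] ja by simp
  have "(j-1)*t + b + 1 \<le> i j \<and> i j \<le> j*t" if j: "j \<in> {1..a}" for j
  proof
    have "i j \<le> i 1 + (j - 1) * t"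
      using gap_bounded_le_add[OF gap, of 1 j] j by simp
    moreover have "j * t = (j - 1) * t + t"
      using j by (cases j) auto
    ultimately show "i j \<le> j * t"
      using i1 by simp
    have "i a \<le> i j + (a - j) * t"
      using gap_bounded_le_add[OF gap, of j a] j by simp
    moreover have "(a - 1) * t = (j - 1) * t + (a - j) * t"
      using j by (simp add: add_mult_distrib[symmetric])
    ultimately show "(j-1)*t + b + 1 \<le> i j"
      using ia_low last_window by linarith
  qed
  with gap show ?thesis
    by blast
qed

lemma position_bounds_imp_hitting_windows:
  fixes n t a b :: nat and i :: "nat \<Rightarrow> nat"
  assumes t: "1 \<le> t" "t \<le> n" and ab: "a = n div t" "b = n mod t"
    and bounds: "\<forall>j\<in>{1..a}. (j-1)*t + b + 1 \<le> i j \<and> i j \<le> j*t"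
    and gap: "\<forall>j\<in>{1..<a}. i (j+1) - i j \<le> t"
  shows "\<forall>W\<in>windows n t. W \<inter> i ` {1..a} \<noteq> {}"
  unfolding windows_hit_iff
proof
  fix k assume k: "k \<in> {1..n-t+1}"
  have a1: "1 \<le> a" and "n - t + 1 = (a - 1) * t + b + 1"
    using div_mod_window_count[OF t] ab by simp_all
  then have ka: "k \<le> i a"
    using bounds k by force
  define j0 where "j0 = (LEAST j. 1 \<le> j \<and> j \<le> a \<and> k \<le> i j)"
  have j0: "1 \<le> j0" "j0 \<le> a" "k \<le> i j0"
    unfolding j0_def by (rule LeastI2[of _ a]; use a1 ka in simp)+
  show "\<exists>j\<in>{1..a}. k \<le> i j \<and> i j \<le> k + t - 1"
  proof (cases "j0 = 1")
    case True
    then show ?thesis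
      using bounds j0 k by force
  next
    case False
    then have "\<not> (1 \<le> j0 - 1 \<and> j0 - 1 \<le> a \<and> k \<le> i (j0 - 1))"
      unfolding j0_def by (intro not_less_Least) (use j0 j0_def in auto)
    then have "i (j0 - 1) < k"
      using j0 False by auto
    moreover have "j0 - 1 \<in> {1..<a}"
      using j0 False by auto
    with gap have "i (j0 - 1 + 1) - i (j0 - 1) \<le> t"
      by blast
    ultimately show ?thesis
      using j0 False by (intro bexI[of _ j0]) auto
  qed
qed

lemma position_bounds_imp_critical_window:
  fixes n t a b :: nat and i :: "nat \<Rightarrow> nat"
  assumes t: "1 \<le> t" "t \<le> n" and ab: "a = n div t" "b = n mod t"
    and bounds: "\<forall>j\<in>{1..a}. (j-1)*t + b + 1 \<le> i j \<and> i j \<le> j*t"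
    and v: "v \<in> i ` {1..a}"
  shows "\<exists>W\<in>windows n t. W \<inter> i ` {1..a} \<subseteq> {v}"
proof -
  obtain j where j: "j \<in> {1..a}" and v_eq: "v = i j"
    using v by blast
  define k where "k = (j - 1) * t + 1"
  have "(j - 1) * t \<le> (a - 1) * t"
    using j by (intro mult_le_mono1) auto
  moreover have "n - t + 1 = (a - 1) * t + b + 1"
    using div_mod_window_count[OF t] ab by simp
  ultimately have "k \<in> {1..n-t+1}"
    unfolding k_def atLeastAtMost_iff by linarith
  then have "{k..k+t-1} \<in> windows n t"
    unfolding windows_def by blast
  have last: "k + t - 1 = j * t"
    using j t unfolding k_def by (cases j) auto
  have "i j' \<notin> {k..k+t-1}" if j': "j' \<in> {1..a}" "j' \<noteq> j" for j'
  proof (cases "j' < j")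
    case True
    then have "j' * t \<le> (j - 1) * t"
      by (intro mult_le_mono1) auto
    moreover have "i j' \<le> j' * t"
      using bounds j'(1) by blast
    ultimately show ?thesis
      unfolding k_def atLeastAtMost_iff by linarith
  next
    case False
    then have "j * t \<le> (j' - 1) * t"
      using j' by (intro mult_le_mono1) auto
    moreover have "(j' - 1) * t + b + 1 \<le> i j'"
      using bounds j'(1) by blast
    ultimately show ?thesis
      unfolding atLeastAtMost_iff last by linarith
  qed
  then have "{k..k+t-1} \<inter> i ` {1..a} \<subseteq> {v}"
    unfolding v_eq by blast
  with \<open>{k..k+t-1} \<in> windows n t\<close> show ?thesis
    by blast
qed

theorem lemma3p3:
  fixes n t a b :: nat and i :: "nat \<Rightarrow> nat"
  assumes "1 \<le> t" and "t \<le> n"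
    and "a = n div t" and "b = n mod t"
    and "\<forall>j\<in>{1..<a}. i j < i (j+1)"
    and "1 \<le> i 1" and "i a \<le> n"
  shows "ideal_gen n (var ` i ` {1..a}) \<in> Ass n (path_ideal n t :: 'a::field mpoly set)
     \<longleftrightarrow> (\<forall>j\<in>{1..a}. (j-1)*t + b + 1 \<le> i j \<and> i j \<le> j*t)
        \<and> (\<forall>j\<in>{1..<a}. i (j+1) - i j \<le> t)"
proof -
  note windows = windows_subset[OF assms(2)]
  show ?thesis
    unfolding path_ideal_eq_sqfree_monomial_ideal[OF assms(2)]
      ideal_gen_vars[OF increasing_image_subset[OF assms(5-7)]]
  proof
    assume "sqfree_monomial_ideal n ((\<lambda>v. {v}) ` i ` {1..a})
      \<in> Ass n (sqfree_monomial_ideal n (windows n t) :: 'a mpoly set)"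
    from Ass_vars_ideal_imp_transversal[OF windows this]
    have "\<forall>W\<in>windows n t. W \<inter> i ` {1..a} \<noteq> {}"
      by (intro ballI)
    then show "(\<forall>j\<in>{1..a}. (j-1)*t + b + 1 \<le> i j \<and> i j \<le> j*t) \<and> (\<forall>j\<in>{1..<a}. i (j+1) - i j \<le> t)"
      by (rule hitting_windows_imp_position_bounds[OF assms(1-5,7)])
  next
    assume "(\<forall>j\<in>{1..a}. (j-1)*t + b + 1 \<le> i j \<and> i j \<le> j*t) \<and> (\<forall>j\<in>{1..<a}. i (j+1) - i j \<le> t)"
    then have bounds: "\<forall>j\<in>{1..a}. (j-1)*t + b + 1 \<le> i j \<and> i j \<le> j*t"
      and gap: "\<forall>j\<in>{1..<a}. i (j+1) - i j \<le> t"
      by blast+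
    note hit = position_bounds_imp_hitting_windows[OF assms(1-4) bounds gap]
    note critical = position_bounds_imp_critical_window[OF assms(1-4) bounds]
    show "sqfree_monomial_ideal n ((\<lambda>v. {v}) ` i ` {1..a})
      \<in> Ass n (sqfree_monomial_ideal n (windows n t) :: 'a mpoly set)"
      by (rule minimal_transversal_imp_Ass_vars_ideal[OF windows]) (use hit critical in auto)
  qed
qed

end
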